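(* For positive integers $c,r$ let $X_{c,r}$ denote the graph with vertex set $\{x_{i,j}:1\le i\le c,\ 1\le j\le r\}$ (where $i$ is the column and $j$ the row, row $1$ being the bottom row) in which $x_{i,j}x_{i',j'}$ is an edge if and only if $i'=i+1$ and $j\ge j'$. Let $n\ge 1$ and let $M,N$ be positive integers. Then every embedding (as an induced subgraph) of $X_{n,4n-1}$ into $X_{M,N}$ contains a copy of $X_{n,n}$ (an induced subgraph of the image isomorphic to $X_{n,n}$) that occupies exactly $n$ contiguous columns of $X_{M,N}$, with each column of this $X_{n,n}$ embedded into a single column of $X_{M,N}$.
   Context: An embedding of a graph $H$ into a graph $G$ is an injective map $\phi:V(H)\to V(G)$ with $uv\in E(H)$ if and only if $\phi(u)\phi(v)\in E(G)$. The graphs $X_{c,r}$ (called $X$-grids) are as defined in the claim; the column of a vertex $x_{i,j}$ is $i$. *)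

theory Defs
  imports Main
begin

text \<open>Vertex x_{i,j} is represented as the pair (i,j): i is the column, j the row.\<close>
definition xgrid_verts :: "nat \<Rightarrow> nat \<Rightarrow> (nat \<times> nat) set" where
  "xgrid_verts c r = {1..c} \<times> {1..r}"

definition xgrid_adj :: "nat \<times> nat \<Rightarrow> nat \<times> nat \<Rightarrow> bool" where
  "xgrid_adj u v \<longleftrightarrow>
     (fst v = fst u + 1 \<and> snd u \<ge> snd v) \<or> (fst u = fst v + 1 \<and> snd v \<ge> snd u)"

definition is_embedding ::
  "'a set \<Rightarrow> ('a \<Rightarrow> 'a \<Rightarrow> bool) \<Rightarrow> 'b set \<Rightarrow> ('b \<Rightarrow> 'b \<Rightarrow> bool) \<Rightarrow> ('a \<Rightarrow> 'b) \<Rightarrow> bool" where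
  "is_embedding VH EH VG EG \<phi> \<longleftrightarrow>
     inj_on \<phi> VH \<and> \<phi> ` VH \<subseteq> VG \<and>
     (\<forall>u\<in>VH. \<forall>v\<in>VH. EH u v \<longleftrightarrow> EG (\<phi> u) (\<phi> v))"

end

theory Submission
  imports Defs
begin

text \<open>
  Call row p a break of column i of the embedded grid if rows p and p+1 of column i are
  mapped into different host columns. Two local facts about X-grids (common neighbours of
  vertices in different columns lie in one column, and a vertex cannot miss two neighbours
  of a vertex in its own column that lie on opposite sides) show that breaks in adjacent
  columns differ by at most one row, and that a break next to a column without breaks sits
  in an extreme row. Propagating this across the n columns, the breaks either all lie in
  n + 2 consecutive rows, or in the lowest and highest n - 1 rows; with 4n - 1 rows there
  are always n consecutive rows free of breaks. On these rows every column lands in a single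
  host column, consecutive columns land in adjacent host columns, and two edges between the
  same pair of host columns must cross, so no host column is revisited after two steps:
  the host columns used are contiguous.
\<close>

lemma const_on_interval_if_steps:
  fixes f :: "nat \<Rightarrow> 'a"
  assumes "\<And>p. a \<le> p \<Longrightarrow> p < b \<Longrightarrow> f (Suc p) = f p" "a \<le> j" "j \<le> b"
  shows "f j = f a"
  using assms(2) by (induction j rule: dec_induct) (use assms in auto)

lemma unit_steps_same_direction:
  fixes c :: "nat \<Rightarrow> nat"
  assumes unit: "\<And>i. a \<le> i \<Longrightarrow> i < b \<Longrightarrow> c (Suc i) = c i + 1 \<or> c i = c (Suc i) + 1"
    and no_return: "\<And>i. a \<le> i \<Longrightarrow> Suc i < b \<Longrightarrow> c (Suc (Suc i)) \<noteq> c i"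
  shows "(\<forall>i\<in>{a..<b}. c (Suc i) = c i + 1) \<or> (\<forall>i\<in>{a..<b}. c i = c (Suc i) + 1)"
proof -
  have same: "c (Suc i) = c i + 1 \<longleftrightarrow> c (Suc a) = c a + 1" if "a \<le> i" "i < b" for i
    using that
  proof (induction i rule: dec_induct)
    case (step m)
    have "c (Suc m) = c m + 1 \<or> c m = c (Suc m) + 1"
      "c (Suc (Suc m)) = c (Suc m) + 1 \<or> c (Suc m) = c (Suc (Suc m)) + 1"
      "c (Suc (Suc m)) \<noteq> c m"
      using step unit[of m] unit[of "Suc m"] no_return[of m] by simp_all
    then have "c (Suc (Suc m)) = c (Suc m) + 1 \<longleftrightarrow> c (Suc m) = c m + 1"
      by presburger
    then show ?case using step by simp
  qed simp
  show ?thesis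
  proof (cases "c (Suc a) = c a + 1")
    case True
    then show ?thesis using same by simp
  next
    case False
    then have "c i = c (Suc i) + 1" if "a \<le> i" "i < b" for i
      using same[OF that] unit[OF that] by simp
    then show ?thesis by simp
  qed
qed

lemma image_atLeastAtMost_unit_increasing:
  fixes c :: "nat \<Rightarrow> nat"
  assumes "a \<le> b" and up: "\<forall>i\<in>{a..<b}. c (Suc i) = c i + 1"
  shows "c ` {a..b} = {c a..c a + (b - a)}"
proof -
  have c: "c i = c a + (i - a)" if "a \<le> i" "i \<le> b" for i
    using that
  proof (induction i rule: dec_induct)
    case (step m)
    then have "c (Suc m) = c m + 1" using up by simp
    then show ?case using step by simp
  qed simp
  show ?thesis
  proof (intro equalityI subsetI)
    fix v assume v: "v \<in> {c a..c a + (b - a)}"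
    obtain k where "v = c a + k" "k \<le> b - a"
      using v by (intro that[of "v - c a"]) auto
    then show "v \<in> c ` {a..b}"
      using c[of "a + k"] assms(1) by (intro image_eqI[of _ _ "a + k"]) auto
  next
    fix v assume "v \<in> c ` {a..b}"
    then obtain i where "i \<in> {a..b}" "v = c i" by blast
    then show "v \<in> {c a..c a + (b - a)}" using c[of i] by auto
  qed
qed

lemma image_atLeastAtMost_unit_decreasing:
  fixes c :: "nat \<Rightarrow> nat"
  assumes "a \<le> b" and down: "\<forall>i\<in>{a..<b}. c i = c (Suc i) + 1"
  shows "c ` {a..b} = {c b..c b + (b - a)}"
proof -
  have c: "c i = c b + (b - i)" if "a \<le> i" "i \<le> b" for i
    using that(2,1)
  proof (induction i rule: inc_induct)
    case (step m)
    then have "c m = c (Suc m) + 1" using down by simp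
    then show ?case using step by simp
  qed simp
  show ?thesis
  proof (intro equalityI subsetI)
    fix v assume v: "v \<in> {c b..c b + (b - a)}"
    obtain k where "v = c b + k" "k \<le> b - a"
      using v by (intro that[of "v - c b"]) auto
    then show "v \<in> c ` {a..b}"
      using c[of "b - k"] assms(1) by (intro image_eqI[of _ _ "b - k"]) auto
  next
    fix v assume "v \<in> c ` {a..b}"
    then obtain i where "i \<in> {a..b}" "v = c i" by blast
    then show "v \<in> {c b..c b + (b - a)}" using c[of i] by auto
  qed
qed

lemma image_atLeastAtMost_unit_steps:
  fixes c :: "nat \<Rightarrow> nat"
  assumes "a \<le> b"
    and unit: "\<And>i. a \<le> i \<Longrightarrow> i < b \<Longrightarrow> c (Suc i) = c i + 1 \<or> c i = c (Suc i) + 1"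
    and no_return: "\<And>i. a \<le> i \<Longrightarrow> Suc i < b \<Longrightarrow> c (Suc (Suc i)) \<noteq> c i"
  shows "\<exists>d. c ` {a..b} = {d..d + (b - a)}"
  using unit_steps_same_direction[of a b c, OF unit no_return]
proof
  assume "\<forall>i\<in>{a..<b}. c (Suc i) = c i + 1"
  from image_atLeastAtMost_unit_increasing[OF assms(1) this] show ?thesis ..
next
  assume "\<forall>i\<in>{a..<b}. c i = c (Suc i) + 1"
  from image_atLeastAtMost_unit_decreasing[OF assms(1) this] show ?thesis ..
qed

lemma is_embedding_adj_iff:
  "is_embedding VH EH VG EG \<phi> \<Longrightarrow> u \<in> VH \<Longrightarrow> v \<in> VH \<Longrightarrow> EG (\<phi> u) (\<phi> v) \<longleftrightarrow> EH u v"
  unfolding is_embedding_def by blast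

lemma is_embedding_comp:
  assumes f: "is_embedding VA EA VB EB f" and g: "is_embedding VB EB VC EC g"
  shows "is_embedding VA EA VC EC (g \<circ> f)"
proof -
  have fVB: "f u \<in> VB" if "u \<in> VA" for u
    using f that unfolding is_embedding_def by blast
  have "inj_on (g \<circ> f) VA"
    using f g unfolding is_embedding_def by (meson comp_inj_on inj_on_subset)
  moreover have "(g \<circ> f) ` VA \<subseteq> VC"
    using g fVB unfolding is_embedding_def by auto
  moreover have "EC ((g \<circ> f) u) ((g \<circ> f) v) \<longleftrightarrow> EA u v" if "u \<in> VA" "v \<in> VA" for u v
    using is_embedding_adj_iff[OF f that] is_embedding_adj_iff[OF g fVB[OF that(1)] fVB[OF that(2)]]
    by simp
  ultimately show ?thesis
    unfolding is_embedding_def by blast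
qed

lemma is_embedding_row_shift:
  assumes "s + m \<le> R"
  shows "is_embedding (xgrid_verts c m) xgrid_adj (xgrid_verts c R) xgrid_adj (apsnd ((+) s))"
  using assms unfolding is_embedding_def xgrid_verts_def xgrid_adj_def
  by (auto simp: inj_on_def)

lemma xgrid_adj_columns: "xgrid_adj u v \<Longrightarrow> fst v = fst u + 1 \<or> fst u = fst v + 1"
  unfolding xgrid_adj_def by auto

lemma xgrid_common_neighbours_same_column:
  assumes "xgrid_adj a1 b1" "xgrid_adj a1 b2" "xgrid_adj a2 b1" "xgrid_adj a2 b2"
    and "fst a1 \<noteq> fst a2"
  shows "fst b1 = fst b2"
  using xgrid_adj_columns[OF assms(1)] xgrid_adj_columns[OF assms(2)]
    xgrid_adj_columns[OF assms(3)] xgrid_adj_columns[OF assms(4)] assms(5)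
  by presburger

lemma xgrid_adj_one_of_two_sides:
  assumes "fst u = fst v" "fst w1 \<noteq> fst w2" "xgrid_adj u w1" "xgrid_adj u w2"
  shows "xgrid_adj v w1 \<or> xgrid_adj v w2"
  using assms unfolding xgrid_adj_def by (elim disjE conjE) auto

lemma xgrid_adj_crossing:
  assumes "xgrid_adj a b" "xgrid_adj c d" "fst a = fst d" "fst b = fst c"
  shows "xgrid_adj a c \<or> xgrid_adj b d"
  using assms unfolding xgrid_adj_def by (elim disjE conjE) auto

locale xgrid_embedding =
  fixes n R M N :: nat and \<phi> :: "nat \<times> nat \<Rightarrow> nat \<times> nat"
  assumes embedding: "is_embedding (xgrid_verts n R) xgrid_adj (xgrid_verts M N) xgrid_adj \<phi>"
begin

definition break :: "nat \<Rightarrow> nat \<Rightarrow> bool" where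
  "break i p \<longleftrightarrow> fst (\<phi> (i, p)) \<noteq> fst (\<phi> (i, Suc p))"

definition unbroken :: "nat \<Rightarrow> bool" where
  "unbroken i \<longleftrightarrow> (\<forall>p. 1 \<le> p \<longrightarrow> p < R \<longrightarrow> \<not> break i p)"

lemma adj_images_iff:
  assumes "1 \<le> i" "i \<le> n" "1 \<le> j" "j \<le> R" "1 \<le> i'" "i' \<le> n" "1 \<le> j'" "j' \<le> R"
  shows "xgrid_adj (\<phi> (i, j)) (\<phi> (i', j')) \<longleftrightarrow> (i' = i + 1 \<and> j' \<le> j) \<or> (i = i' + 1 \<and> j \<le> j')"
  using is_embedding_adj_iff[OF embedding, of "(i, j)" "(i', j')"] assms
  by (simp add: xgrid_verts_def xgrid_adj_def)

lemma image_column_positive: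
  assumes "1 \<le> i" "i \<le> n" "1 \<le> j" "j \<le> R"
  shows "1 \<le> fst (\<phi> (i, j))"
proof -
  have "(i, j) \<in> xgrid_verts n R"
    using assms by (simp add: xgrid_verts_def)
  then have "\<phi> (i, j) \<in> xgrid_verts M N"
    using embedding unfolding is_embedding_def by blast
  then show ?thesis
    by (auto simp: xgrid_verts_def mem_Times_iff)
qed

lemma unbroken_same_column:
  assumes "unbroken i" "1 \<le> j" "j \<le> R"
  shows "fst (\<phi> (i, j)) = fst (\<phi> (i, 1))"
  using const_on_interval_if_steps[of 1 R "\<lambda>j. fst (\<phi> (i, j))" j] assms
  unfolding unbroken_def break_def by auto

lemma breaks_in_adjacent_columns:
  assumes "break i p" "break (Suc i) q" "1 \<le> i" "Suc i \<le> n" "1 \<le> p" "p < R" "1 \<le> q" "q < R"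
  shows "p \<le> q \<and> q \<le> Suc p"
proof (rule ccontr)
  assume "\<not> (p \<le> q \<and> q \<le> Suc p)"
  then consider "q < p" | "Suc p < q" by linarith
  then show False
  proof cases
    case 1
    have "fst (\<phi> (Suc i, q)) = fst (\<phi> (Suc i, Suc q))"
      by (rule xgrid_common_neighbours_same_column[of "\<phi> (i, p)" _ _ "\<phi> (i, Suc p)"])
        (use 1 assms in \<open>simp_all add: adj_images_iff break_def\<close>)
    then show False using assms(2) by (simp add: break_def)
  next
    case 2
    \<comment> \<open>Rows p, p+1 and q+1 of column i all see the bottom vertex of column i+1, so their
      images occupy only the two columns next to it.\<close>
    have "xgrid_adj (\<phi> (i, r)) (\<phi> (Suc i, 1))" if "r \<in> {p, Suc p, Suc q}" for r
      using that 2 assms by (auto simp: adj_images_iff)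
    then have cols: "fst (\<phi> (Suc i, 1)) = fst (\<phi> (i, r)) + 1 \<or> fst (\<phi> (i, r)) = fst (\<phi> (Suc i, 1)) + 1"
      if "r \<in> {p, Suc p, Suc q}" for r
      using that xgrid_adj_columns by blast
    have "fst (\<phi> (i, Suc q)) = fst (\<phi> (i, p)) \<or> fst (\<phi> (i, Suc q)) = fst (\<phi> (i, Suc p))"
      using cols[of p] cols[of "Suc p"] cols[of "Suc q"] assms(1) unfolding break_def by auto
    then obtain r where r: "r \<in> {p, Suc p}" "fst (\<phi> (i, Suc q)) = fst (\<phi> (i, r))"
      by blast
    have "xgrid_adj (\<phi> (i, r)) (\<phi> (Suc i, q)) \<or> xgrid_adj (\<phi> (i, r)) (\<phi> (Suc i, Suc q))"
      by (rule xgrid_adj_one_of_two_sides[OF r(2)])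
        (use 2 assms in \<open>simp_all add: adj_images_iff break_def\<close>)
    then show False using r(1) 2 assms by (auto simp: adj_images_iff)
  qed
qed

lemma break_before_unbroken:
  assumes "break i p" "unbroken (Suc i)" "1 \<le> i" "Suc i \<le> n" "1 \<le> p" "p < R"
  shows "Suc p = R"
proof (rule ccontr)
  assume "Suc p \<noteq> R"
  then have "p + 2 \<le> R" using assms(6) by linarith
  have "fst (\<phi> (Suc i, p)) = fst (\<phi> (Suc i, p + 2))"
    using unbroken_same_column[OF assms(2), of p] unbroken_same_column[OF assms(2), of "p + 2"]
      \<open>p + 2 \<le> R\<close> assms by simp
  then have "xgrid_adj (\<phi> (Suc i, p + 2)) (\<phi> (i, p)) \<or> xgrid_adj (\<phi> (Suc i, p + 2)) (\<phi> (i, Suc p))"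
    by (rule xgrid_adj_one_of_two_sides)
      (use \<open>p + 2 \<le> R\<close> assms in \<open>simp_all add: adj_images_iff break_def\<close>)
  then show False using \<open>p + 2 \<le> R\<close> assms by (auto simp: adj_images_iff)
qed

lemma break_after_unbroken:
  assumes "break (Suc i) q" "unbroken i" "1 \<le> i" "Suc i \<le> n" "1 \<le> q" "q < R"
  shows "q = 1"
proof (rule ccontr)
  assume "q \<noteq> 1"
  have "fst (\<phi> (i, Suc q)) = fst (\<phi> (i, q - 1))"
    using unbroken_same_column[OF assms(2), of "Suc q"] unbroken_same_column[OF assms(2), of "q - 1"]
      \<open>q \<noteq> 1\<close> assms by simp
  then have "xgrid_adj (\<phi> (i, q - 1)) (\<phi> (Suc i, q)) \<or> xgrid_adj (\<phi> (i, q - 1)) (\<phi> (Suc i, Suc q))"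
    by (rule xgrid_adj_one_of_two_sides)
      (use assms in \<open>simp_all add: adj_images_iff break_def\<close>)
  then show False using \<open>q \<noteq> 1\<close> assms by (auto simp: adj_images_iff)
qed

lemma break_left_of_unbroken:
  assumes "unbroken k" "k \<le> n" "1 \<le> i" "i \<le> k" "break i p" "1 \<le> p" "p < R"
  shows "R \<le> p + (k - i)"
  using assms(4-7)
proof (induction i arbitrary: p rule: inc_induct)
  case base
  then show ?case using assms(1) by (simp add: unbroken_def)
next
  case (step m)
  show ?case
  proof (cases "unbroken (Suc m)")
    case True
    then show ?thesis
      using break_before_unbroken[of m p] step assms(2,3) by simp
  next
    case False
    then obtain q where q: "break (Suc m) q" "1 \<le> q" "q < R"
      by (auto simp: unbroken_def)
    then have "q \<le> Suc p"
      using breaks_in_adjacent_columns[of m p q] step assms(2,3) by simp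
    then show ?thesis using step.IH[OF q] step.hyps by linarith
  qed
qed

lemma break_right_of_unbroken:
  assumes "unbroken k" "1 \<le> k" "k \<le> i" "i \<le> n" "break i p" "1 \<le> p" "p < R"
  shows "p \<le> i - k"
  using assms(3-7)
proof (induction i arbitrary: p rule: dec_induct)
  case base
  then show ?case using assms(1) by (simp add: unbroken_def)
next
  case (step m)
  show ?case
  proof (cases "unbroken m")
    case True
    then show ?thesis
      using break_after_unbroken[of m p] step assms(2) by simp
  next
    case False
    then obtain q where q: "break m q" "1 \<le> q" "q < R"
      by (auto simp: unbroken_def)
    then have "p \<le> Suc q"
      using breaks_in_adjacent_columns[of m q p] step assms(2) by simp
    then show ?thesis using step.IH[OF _ q] step.hyps step.prems by linarith
  qed
qed

lemma breaks_near_first_column_break: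
  assumes all_broken: "\<And>i. 1 \<le> i \<Longrightarrow> i \<le> n \<Longrightarrow> \<not> unbroken i" and "2 \<le> n"
    and p1: "break 1 p1" "1 \<le> p1" "p1 < R"
    and "1 \<le> i" "i \<le> n" "break i p" "1 \<le> p" "p < R"
  shows "p1 \<le> Suc p \<and> p \<le> p1 + i"
  using assms(6-10)
proof (induction i arbitrary: p rule: dec_induct)
  case base
  obtain q where q: "break 2 q" "1 \<le> q" "q < R"
    using all_broken[of 2] \<open>2 \<le> n\<close> by (auto simp: unbroken_def)
  then show ?case
    using breaks_in_adjacent_columns[of 1 p1 q] breaks_in_adjacent_columns[of 1 p q]
      p1 base \<open>2 \<le> n\<close> by (simp add: numeral_2_eq_2)
next
  case (step m)
  obtain q where q: "break m q" "1 \<le> q" "q < R"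
    using all_broken[of m] step.hyps step.prems by (auto simp: unbroken_def)
  have "p1 \<le> Suc q \<and> q \<le> p1 + m"
    using step.IH[OF _ q] step.prems by simp
  moreover have "q \<le> p \<and> p \<le> Suc q"
    using breaks_in_adjacent_columns[of m q p] q step by simp
  ultimately show ?case by linarith
qed

definition break_free_window :: "nat \<Rightarrow> bool" where
  "break_free_window s \<longleftrightarrow>
     s + n \<le> R \<and> (\<forall>i p. 1 \<le> i \<longrightarrow> i \<le> n \<longrightarrow> s < p \<longrightarrow> p < s + n \<longrightarrow> \<not> break i p)"

lemma break_free_window_if_unbroken:
  assumes "unbroken k" "1 \<le> k" "k \<le> n" "4 * n - 1 \<le> R"
  shows "break_free_window (n - 1)"
  unfolding break_free_window_def
proof (intro conjI allI impI notI)
  fix i p assume i: "1 \<le> i" "i \<le> n" and p: "n - 1 < p" "p < n - 1 + n" and "break i p"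
  have "p < R" using p assms(4) by linarith
  consider "i < k" | "i = k" | "k < i" by linarith
  then show False
  proof cases
    case 1
    then show False
      using break_left_of_unbroken[of k i p] assms i p \<open>p < R\<close> \<open>break i p\<close> by linarith
  next
    case 2
    then show False
      using \<open>break i p\<close> assms(1) p \<open>p < R\<close> unfolding unbroken_def by simp
  next
    case 3
    then show False
      using break_right_of_unbroken[of k i p] assms i p \<open>p < R\<close> \<open>break i p\<close> by linarith
  qed
qed (use assms in simp)

lemma break_free_window_if_all_broken:
  assumes "\<And>i. 1 \<le> i \<Longrightarrow> i \<le> n \<Longrightarrow> \<not> unbroken i" "2 \<le> n" "4 * n - 1 \<le> R"
  shows "\<exists>s. break_free_window s"
proof -
  obtain p1 where p1: "break 1 p1" "1 \<le> p1" "p1 < R"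
    using assms(1)[of 1] assms(2) by (auto simp: unbroken_def)
  note near = breaks_near_first_column_break[OF assms(1,2) p1]
  \<comment> \<open>All breaks lie in rows p1 - 1 to p1 + n, so a window fits below or above them.\<close>
  show ?thesis
  proof (cases "n < p1")
    case True
    have "break_free_window 0"
      unfolding break_free_window_def using near True assms(2,3) by fastforce
    then show ?thesis ..
  next
    case False
    have "break_free_window (p1 + n)"
      unfolding break_free_window_def using near False assms(2,3) by fastforce
    then show ?thesis ..
  qed
qed

lemma exists_break_free_window:
  assumes "1 \<le> n" "4 * n - 1 \<le> R"
  shows "\<exists>s. break_free_window s"
proof (cases "n = 1")
  case True
  have "break_free_window 0"
    unfolding break_free_window_def using True assms(2) by simp
  then show ?thesis ..
next
  case False
  then show ?thesis
    using break_free_window_if_unbroken break_free_window_if_all_broken assms by fastforce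
qed

lemma window_same_column:
  assumes "break_free_window s" "1 \<le> i" "i \<le> n" "1 \<le> j" "j \<le> n"
  shows "fst (\<phi> (i, s + j)) = fst (\<phi> (i, Suc s))"
  using const_on_interval_if_steps[of "Suc s" "s + n" "\<lambda>j. fst (\<phi> (i, j))" "s + j"] assms
  unfolding break_free_window_def break_def by auto

lemma window_columns_contiguous:
  assumes "1 \<le> n" and window: "break_free_window s"
  shows "\<exists>a. (\<lambda>i. fst (\<phi> (i, Suc s))) ` {1..n} = {a + 1..a + n}"
proof -
  define c where "c i = fst (\<phi> (i, Suc s))" for i
  have "s + n \<le> R" using window by (simp add: break_free_window_def)
  have unit: "c (Suc i) = c i + 1 \<or> c i = c (Suc i) + 1" if "1 \<le> i" "i < n" for i
    using xgrid_adj_columns[of "\<phi> (i, Suc s)" "\<phi> (Suc i, Suc s)"] that \<open>s + n \<le> R\<close>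
    unfolding c_def by (simp add: adj_images_iff)
  have no_return: "c (Suc (Suc i)) \<noteq> c i" if "1 \<le> i" "Suc i < n" for i
  proof
    assume "c (Suc (Suc i)) = c i"
    \<comment> \<open>The two edges from row s+1 of column i and from row s+2 of column i+1 would
      run between the same pair of columns without crossing.\<close>
    then have "xgrid_adj (\<phi> (i, Suc s)) (\<phi> (Suc i, s + 2))
        \<or> xgrid_adj (\<phi> (Suc i, Suc s)) (\<phi> (Suc (Suc i), s + 2))"
      using window_same_column[OF window, of "Suc (Suc i)" 2] window_same_column[OF window, of "Suc i" 2]
        that \<open>s + n \<le> R\<close>
      by (intro xgrid_adj_crossing) (simp_all add: c_def adj_images_iff)
    then show False
      using that \<open>s + n \<le> R\<close> by (simp add: adj_images_iff)
  qed
  obtain d where d: "c ` {1..n} = {d..d + (n - 1)}"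
    using image_atLeastAtMost_unit_steps[of 1 n c] assms(1) unit no_return by auto
  have "1 \<le> c i" if "1 \<le> i" "i \<le> n" for i
    using image_column_positive[of i "Suc s"] that \<open>s + n \<le> R\<close> unfolding c_def by simp
  moreover have "d \<in> c ` {1..n}"
    using d by simp
  ultimately have "1 \<le> d"
    by auto
  then have "c ` {1..n} = {d - 1 + 1..d - 1 + n}"
    using d assms(1) by simp
  then show ?thesis
    unfolding c_def by blast
qed

lemma window_image_columns:
  assumes "1 \<le> n" and window: "break_free_window s"
  shows "fst ` (\<phi> \<circ> apsnd ((+) s)) ` xgrid_verts n n = (\<lambda>i. fst (\<phi> (i, Suc s))) ` {1..n}"
proof (intro equalityI subsetI)
  fix v assume "v \<in> fst ` (\<phi> \<circ> apsnd ((+) s)) ` xgrid_verts n n"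
  then obtain i j where "i \<in> {1..n}" "j \<in> {1..n}" "v = fst (\<phi> (i, s + j))"
    unfolding xgrid_verts_def by auto
  then show "v \<in> (\<lambda>i. fst (\<phi> (i, Suc s))) ` {1..n}"
    using window_same_column[OF window] by simp
next
  fix v assume "v \<in> (\<lambda>i. fst (\<phi> (i, Suc s))) ` {1..n}"
  then obtain i where i: "i \<in> {1..n}" "v = fst ((\<phi> \<circ> apsnd ((+) s)) (i, 1))"
    by auto
  moreover have "(i, 1) \<in> xgrid_verts n n"
    using i assms(1) by (simp add: xgrid_verts_def)
  ultimately show "v \<in> fst ` (\<phi> \<circ> apsnd ((+) s)) ` xgrid_verts n n"
    by (metis image_eqI)
qed

lemma contiguous_subgrid_if_window:
  assumes "1 \<le> n" and window: "break_free_window s"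
  shows "\<exists>\<psi> a. is_embedding (xgrid_verts n n) xgrid_adj (xgrid_verts M N) xgrid_adj \<psi>
            \<and> \<psi> ` xgrid_verts n n \<subseteq> \<phi> ` xgrid_verts n R
            \<and> fst ` \<psi> ` xgrid_verts n n = {a+1..a+n}
            \<and> (\<forall>i\<in>{1..n}. \<forall>j\<in>{1..n}. \<forall>j'\<in>{1..n}. fst (\<psi> (i,j)) = fst (\<psi> (i,j')))"
proof -
  define \<psi> where "\<psi> = \<phi> \<circ> apsnd ((+) s)"
  have "s + n \<le> R" using window by (simp add: break_free_window_def)
  have shift: "is_embedding (xgrid_verts n n) xgrid_adj (xgrid_verts n R) xgrid_adj (apsnd ((+) s))"
    using is_embedding_row_shift \<open>s + n \<le> R\<close> .
  have column: "fst (\<psi> (i, j)) = fst (\<phi> (i, Suc s))" if "i \<in> {1..n}" "j \<in> {1..n}" for i j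
    using window_same_column[OF window] that unfolding \<psi>_def by simp
  obtain a where a: "(\<lambda>i. fst (\<phi> (i, Suc s))) ` {1..n} = {a + 1..a + n}"
    using window_columns_contiguous[OF assms] by blast
  show ?thesis
  proof (intro exI conjI)
    show "is_embedding (xgrid_verts n n) xgrid_adj (xgrid_verts M N) xgrid_adj \<psi>"
      unfolding \<psi>_def using is_embedding_comp[OF shift embedding] .
    have "apsnd ((+) s) ` xgrid_verts n n \<subseteq> xgrid_verts n R"
      using shift by (simp add: is_embedding_def)
    then show "\<psi> ` xgrid_verts n n \<subseteq> \<phi> ` xgrid_verts n R"
      unfolding \<psi>_def image_comp[symmetric] by (rule image_mono)
    show "fst ` \<psi> ` xgrid_verts n n = {a + 1..a + n}"
      using window_image_columns[OF assms] a unfolding \<psi>_def by simp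
    show "\<forall>i\<in>{1..n}. \<forall>j\<in>{1..n}. \<forall>j'\<in>{1..n}. fst (\<psi> (i, j)) = fst (\<psi> (i, j'))"
      using column by simp
  qed
qed

end

theorem lemma8:
  fixes n M N :: nat and \<phi> :: "nat \<times> nat \<Rightarrow> nat \<times> nat"
  assumes "n \<ge> 1" and "M \<ge> 1" and "N \<ge> 1"
    and "is_embedding (xgrid_verts n (4*n - 1)) xgrid_adj (xgrid_verts M N) xgrid_adj \<phi>"
  shows "\<exists>\<psi> a. is_embedding (xgrid_verts n n) xgrid_adj (xgrid_verts M N) xgrid_adj \<psi>
            \<and> \<psi> ` xgrid_verts n n \<subseteq> \<phi> ` xgrid_verts n (4*n - 1)
            \<and> fst ` \<psi> ` xgrid_verts n n = {a+1..a+n}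
            \<and> (\<forall>i\<in>{1..n}. \<forall>j\<in>{1..n}. \<forall>j'\<in>{1..n}. fst (\<psi> (i,j)) = fst (\<psi> (i,j')))"
proof -
  interpret xgrid_embedding n "4 * n - 1" M N \<phi>
    using assms(4) by unfold_locales
  obtain s where "break_free_window s"
    using exists_break_free_window assms(1) by blast
  then show ?thesis
    using contiguous_subgrid_if_window assms(1) by blast
qed

end
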